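(* (i) Let $a\in(0,1/2]$. For any $\rho,\rho'\in(0,1)$ with $\rho\ge a\rho'$, $$Q(\rho,\rho')\le\frac{5}{3a}K(\rho,\rho').$$ By contrast, for any constant $a>0$, $\sup\{Q(\rho,\rho')/L(\rho,\rho'):\rho,\rho'\in(0,1),\ \rho\ge a\rho'\}=\infty$. (ii) Consequently, if for a fixed $\gamma$ one has $\pi(X;\gamma)\ge a\,\pi^*(X)$ almost surely for some $a\in(0,1/2]$, then $$E\big[Q\{\pi(X;\gamma),\pi^*(X)\}\big]\le\frac{5}{3a}E\big[K\{\pi(X;\gamma),\pi^*(X)\}\big].$$
   Context: For $\rho,\rho'\in(0,1)$: $Q(\rho,\rho')=(\rho'/\rho-1)^2$, $K(\rho,\rho')=\rho'/\rho-1-\log(\rho'/\rho)$, $L(\rho,\rho')=\rho'\log(\rho/\rho')+(1-\rho')\log\{(1-\rho)/(1-\rho')\}$. In (ii), $\pi^*(X)=P(T=1\mid X)\in(0,1)$ and $\pi(X;\gamma)=\{1+e^{-\gamma^\top f(X)}\}^{-1}$. *)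

theory Defs
  imports "HOL-Probability.Probability"
begin

definition Qf :: "real \<Rightarrow> real \<Rightarrow> real" where
  "Qf \<rho> \<rho>' = (\<rho>' / \<rho> - 1)\<^sup>2"

definition Kf :: "real \<Rightarrow> real \<Rightarrow> real" where
  "Kf \<rho> \<rho>' = \<rho>' / \<rho> - 1 - ln (\<rho>' / \<rho>)"

definition Lf :: "real \<Rightarrow> real \<Rightarrow> real" where
  "Lf \<rho> \<rho>' = \<rho>' * ln (\<rho> / \<rho>') + (1 - \<rho>') * ln ((1 - \<rho>) / (1 - \<rho>'))"

definition logistic_pi :: "('b \<Rightarrow> 'v::euclidean_space) \<Rightarrow> 'v \<Rightarrow> 'b \<Rightarrow> real" where
  "logistic_pi f \<gamma> x = 1 / (1 + exp (- (\<gamma> \<bullet> f x)))"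

end

theory Submission imports Defs begin

text \<open>With \<open>t = \<rho>'/\<rho>\<close> one has \<open>Q = (t - 1)\<^sup>2\<close> and \<open>K = t - 1 - ln t\<close>, and the ratio
  \<open>(t - 1)\<^sup>2 / (t - 1 - ln t)\<close> is at most \<open>10/3\<close> for \<open>t \<le> 2\<close> and at most \<open>5t/3\<close> for
  \<open>t \<ge> 2\<close>; the constraint \<open>\<rho> \<ge> a\<rho>'\<close> means \<open>t \<le> 1/a\<close>, which gives (i).
  For the contrast, \<open>-L\<close> is a Kullback-Leibler divergence, bounded by the chi-square
  divergence \<open>(\<rho>' - \<rho>)\<^sup>2 / (\<rho>(1 - \<rho>))\<close>, so \<open>Q / (-L) \<ge> (1 - \<rho>)/\<rho>\<close>, which blows up as
  \<open>\<rho> \<rightarrow> 0\<close>.\<close>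

lemma ln_less_minus_one:
  fixes x :: real
  assumes "0 < x" "x \<noteq> 1"
  shows "ln x < x - 1"
  using ln_le_minus_one[OF assms(1)] ln_eq_minus_one[OF assms(1)] assms(2) by fastforce

lemma ln_le_quadratic_below_one:
  fixes t :: real
  assumes "0 < t" "t \<le> 1"
  shows "ln t \<le> t - 1 - (t - 1)\<^sup>2 / 2"
proof -
  let ?H = "\<lambda>t::real. t - 1 - (t - 1)\<^sup>2 / 2 - ln t"
  have "?H 1 \<le> ?H t"
  proof (rule DERIV_nonpos_imp_decreasing_open[OF assms(2)])
    fix x assume x: "t < x" "x < 1"
    have "(?H has_real_derivative - ((x - 1)\<^sup>2) / x) (at x)"
      using x assms by (auto intro!: derivative_eq_intros simp: power2_eq_square field_simps)
    moreover have "- ((x - 1)\<^sup>2) / x \<le> 0"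
      using x assms by simp
    ultimately show "\<exists>y. (?H has_real_derivative y) (at x) \<and> y \<le> 0" by blast
  qed (use assms in \<open>auto intro!: continuous_intros\<close>)
  then show ?thesis by simp
qed

lemma ln_le_quadratic_one_two:
  fixes t :: real
  assumes "1 \<le> t" "t \<le> 2"
  shows "ln t \<le> t - 1 - 3/10 * (t - 1)\<^sup>2"
proof -
  let ?H = "\<lambda>t::real. t - 1 - 3/10 * (t - 1)\<^sup>2 - ln t"
  have deriv: "(?H has_real_derivative (x - 1) * (1 - 6/10 * x) / x) (at x)" if "0 < x" for x
    using that by (auto intro!: derivative_eq_intros simp: field_simps power2_eq_square)
  \<comment> \<open>\<open>?H\<close> increases on \<open>[1, 5/3]\<close> and decreases on \<open>[5/3, 2]\<close>, so it is least at an endpoint.\<close>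
  show ?thesis
  proof (cases "t \<le> 5/3")
    case True
    have "?H 1 \<le> ?H t"
    proof (rule DERIV_nonneg_imp_increasing_open[OF assms(1)])
      fix x assume x: "1 < x" "x < t"
      then have "0 \<le> (x - 1) * (1 - 6/10 * x) / x"
        using True by (intro divide_nonneg_pos mult_nonneg_nonneg) auto
      with deriv[of x] x show "\<exists>y. (?H has_real_derivative y) (at x) \<and> 0 \<le> y" by auto
    qed (use assms in \<open>auto intro!: continuous_intros\<close>)
    then show ?thesis by simp
  next
    case False
    have "?H 2 \<le> ?H t"
    proof (rule DERIV_nonpos_imp_decreasing_open[OF assms(2)])
      fix x assume x: "t < x" "x < 2"
      then have "(x - 1) * (1 - 6/10 * x) / x \<le> 0"
        using False by (intro divide_nonpos_pos mult_nonneg_nonpos) auto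
      with deriv[of x] x False show "\<exists>y. (?H has_real_derivative y) (at x) \<and> y \<le> 0" by auto
    qed (use assms in \<open>auto intro!: continuous_intros\<close>)
    then show ?thesis using ln2_le_25_over_36 by simp
  qed
qed

lemma ln_le_quadratic_above_two:
  fixes t :: real
  assumes "2 \<le> t"
  shows "ln t \<le> t - 1 - 3 * (t - 1)\<^sup>2 / (5 * t)"
proof -
  let ?H = "\<lambda>t::real. t - 1 - 3 * (t - 1)\<^sup>2 / (5 * t) - ln t"
  have "?H 2 \<le> ?H t"
  proof (rule DERIV_nonneg_imp_increasing_open[OF assms])
    fix x assume x: "2 < x" "x < t"
    have "(?H has_real_derivative (2 * x - 3) * (x - 1) / (5 * x\<^sup>2)) (at x)"
      using x by (auto intro!: derivative_eq_intros simp: power2_eq_square field_simps)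
    moreover have "0 \<le> (2 * x - 3) * (x - 1) / (5 * x\<^sup>2)"
      using x by (intro divide_nonneg_pos mult_nonneg_nonneg) auto
    ultimately show "\<exists>y. (?H has_real_derivative y) (at x) \<and> 0 \<le> y" by blast
  qed (use assms in \<open>auto intro!: continuous_intros\<close>)
  then show ?thesis using ln2_le_25_over_36 by simp
qed

lemma square_le_max_mult_minus_ln:
  fixes t :: real
  assumes "0 < t"
  shows "(t - 1)\<^sup>2 \<le> max (10/3) (5 * t / 3) * (t - 1 - ln t)"
proof -
  have nonneg: "0 \<le> t - 1 - ln t" using ln_le_minus_one[OF assms] by simp
  consider "t \<le> 1" | "1 \<le> t" "t \<le> 2" | "2 \<le> t" by linarith
  then show ?thesis
  proof cases
    case 1
    then have "(t - 1)\<^sup>2 \<le> 2 * (t - 1 - ln t)"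
      using ln_le_quadratic_below_one[OF assms] by simp
    also have "\<dots> \<le> max (10/3) (5 * t / 3) * (t - 1 - ln t)"
      using nonneg by (intro mult_right_mono) auto
    finally show ?thesis .
  next
    case 2
    then have "(t - 1)\<^sup>2 \<le> 10/3 * (t - 1 - ln t)"
      using ln_le_quadratic_one_two[OF 2] by simp
    also have "\<dots> \<le> max (10/3) (5 * t / 3) * (t - 1 - ln t)"
      using nonneg by (intro mult_right_mono) auto
    finally show ?thesis .
  next
    case 3
    then have "(t - 1)\<^sup>2 \<le> 5 * t / 3 * (t - 1 - ln t)"
      using ln_le_quadratic_above_two[OF 3] assms by (simp add: field_simps)
    also have "\<dots> \<le> max (10/3) (5 * t / 3) * (t - 1 - ln t)"
      using nonneg by (intro mult_right_mono) auto
    finally show ?thesis .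
  qed
qed

lemma Qf_le_Kf:
  fixes a \<rho> \<rho>' :: real
  assumes "0 < a" "a \<le> 1/2" "0 < \<rho>" "0 < \<rho>'" "a * \<rho>' \<le> \<rho>"
  shows "Qf \<rho> \<rho>' \<le> 5 / (3 * a) * Kf \<rho> \<rho>'"
proof -
  define t where "t = \<rho>' / \<rho>"
  have "0 < t" using assms by (simp add: t_def)
  have "max (10/3) (5 * t / 3) \<le> 5 / (3 * a)"
    using assms by (auto simp: t_def field_simps)
  moreover have "0 \<le> t - 1 - ln t" using ln_le_minus_one[OF \<open>0 < t\<close>] by simp
  ultimately have "max (10/3) (5 * t / 3) * (t - 1 - ln t) \<le> 5 / (3 * a) * (t - 1 - ln t)"
    by (rule mult_right_mono)
  with square_le_max_mult_minus_ln[OF \<open>0 < t\<close>] show ?thesis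
    by (simp add: Qf_def Kf_def t_def)
qed

lemma Lf_neg:
  fixes \<rho> \<rho>' :: real
  assumes "\<rho> \<in> {0<..<1}" "\<rho>' \<in> {0<..<1}" "\<rho> \<noteq> \<rho>'"
  shows "Lf \<rho> \<rho>' < 0"
proof -
  have "\<rho>' * ln (\<rho> / \<rho>') < \<rho>' * (\<rho> / \<rho>' - 1)"
    using assms by (intro mult_strict_left_mono ln_less_minus_one) auto
  moreover have "(1 - \<rho>') * ln ((1 - \<rho>) / (1 - \<rho>')) \<le> (1 - \<rho>') * ((1 - \<rho>) / (1 - \<rho>') - 1)"
    using assms by (intro mult_left_mono ln_le_minus_one) auto
  moreover have "\<rho>' * (\<rho> / \<rho>' - 1) + (1 - \<rho>') * ((1 - \<rho>) / (1 - \<rho>') - 1) = 0"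
    using assms by (simp add: field_simps)
  ultimately show ?thesis
    unfolding Lf_def by linarith
qed

lemma neg_Lf_le_chi_square:
  fixes \<rho> \<rho>' :: real
  assumes "\<rho> \<in> {0<..<1}" "\<rho>' \<in> {0<..<1}"
  shows "- Lf \<rho> \<rho>' \<le> (\<rho>' - \<rho>)\<^sup>2 / (\<rho> * (1 - \<rho>))"
proof -
  have "\<rho>' * ln (\<rho>' / \<rho>) \<le> \<rho>' * (\<rho>' / \<rho> - 1)"
    using assms by (intro mult_left_mono ln_le_minus_one) auto
  moreover have "(1 - \<rho>') * ln ((1 - \<rho>') / (1 - \<rho>)) \<le> (1 - \<rho>') * ((1 - \<rho>') / (1 - \<rho>) - 1)"
    using assms by (intro mult_left_mono ln_le_minus_one) auto
  moreover have "\<rho>' * (\<rho>' / \<rho> - 1) + (1 - \<rho>') * ((1 - \<rho>') / (1 - \<rho>) - 1)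
      = (\<rho>' - \<rho>)\<^sup>2 / (\<rho> * (1 - \<rho>))"
    using assms by (simp add: field_simps power2_eq_square)
  moreover have "- Lf \<rho> \<rho>' = \<rho>' * ln (\<rho>' / \<rho>) + (1 - \<rho>') * ln ((1 - \<rho>') / (1 - \<rho>))"
    using assms by (simp add: Lf_def ln_div algebra_simps)
  ultimately show ?thesis by linarith
qed

lemma Qf_div_neg_Lf_ge:
  fixes \<rho> \<rho>' :: real
  assumes "\<rho> \<in> {0<..<1}" "\<rho>' \<in> {0<..<1}" "\<rho> \<noteq> \<rho>'"
  shows "(1 - \<rho>) / \<rho> \<le> Qf \<rho> \<rho>' / - Lf \<rho> \<rho>'"
proof -
  define d where "d = (\<rho>' - \<rho>)\<^sup>2"
  have "0 < d" using assms(3) by (simp add: d_def)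
  have Q: "Qf \<rho> \<rho>' = d / \<rho>\<^sup>2"
    using assms by (simp add: Qf_def d_def field_simps power2_eq_square)
  have "(1 - \<rho>) / \<rho> = Qf \<rho> \<rho>' / (d / (\<rho> * (1 - \<rho>)))"
    using assms(1) \<open>0 < d\<close> unfolding Q by (simp add: field_simps power2_eq_square)
  also have "\<dots> \<le> Qf \<rho> \<rho>' / - Lf \<rho> \<rho>'"
  proof (rule divide_left_mono)
    show "- Lf \<rho> \<rho>' \<le> d / (\<rho> * (1 - \<rho>))"
      using neg_Lf_le_chi_square[OF assms(1,2)] by (simp add: d_def)
    have "0 < d / (\<rho> * (1 - \<rho>))" using assms(1) \<open>0 < d\<close> by simp
    then show "0 < d / (\<rho> * (1 - \<rho>)) * - Lf \<rho> \<rho>'"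
      by (rule mult_pos_pos) (use Lf_neg[OF assms] in simp)
  qed (simp add: Qf_def)
  finally show ?thesis .
qed

lemma Qf_div_neg_Lf_unbounded:
  fixes a :: real
  assumes "0 < a"
  shows "\<not> bdd_above {Qf \<rho> \<rho>' / (- Lf \<rho> \<rho>') | \<rho> \<rho>'.
                       \<rho> \<in> {0<..<1} \<and> \<rho>' \<in> {0<..<1} \<and> \<rho> \<ge> a * \<rho>'}"
    (is "\<not> bdd_above ?S")
proof
  assume "bdd_above ?S"
  then obtain B where B: "\<And>x. x \<in> ?S \<Longrightarrow> x \<le> B" by (auto simp: bdd_above_def)
  define \<rho> where "\<rho> = 1 / (\<bar>B\<bar> + 2)"
  define \<rho>' where "\<rho>' = \<rho> / (a + 1)"
  have "1 < \<bar>B\<bar> + 2" using abs_ge_zero[of B] by linarith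
  then have \<rho>: "\<rho> \<in> {0<..<1}" by (simp add: \<rho>_def)
  have \<rho>': "\<rho>' \<in> {0<..<1}" "\<rho>' < \<rho>" "a * \<rho>' \<le> \<rho>"
    using \<rho> assms by (auto simp: \<rho>'_def field_simps)
  have "B < 1 / \<rho> - 1" by (simp add: \<rho>_def)
  also have "\<dots> = (1 - \<rho>) / \<rho>" using \<rho> by (simp add: diff_divide_distrib)
  also have "\<dots> \<le> Qf \<rho> \<rho>' / - Lf \<rho> \<rho>'"
    using \<rho> \<rho>' by (intro Qf_div_neg_Lf_ge) auto
  also have "\<dots> \<le> B"
    using \<rho> \<rho>' by (intro B CollectI exI[of _ \<rho>] exI[of _ \<rho>']) auto
  finally show False by simp
qed

lemma logistic_pi_bounds: "0 < logistic_pi f \<gamma> x" "logistic_pi f \<gamma> x < 1"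
  by (simp_all add: logistic_pi_def add_pos_pos)

lemma nn_integral_le_cmult_AE:
  fixes f g :: "'a \<Rightarrow> real"
  assumes "0 \<le> c" "g \<in> borel_measurable M" "AE x in M. f x \<le> c * g x"
  shows "(\<integral>\<^sup>+ x. ennreal (f x) \<partial>M) \<le> ennreal c * (\<integral>\<^sup>+ x. ennreal (g x) \<partial>M)"
proof -
  have "(\<integral>\<^sup>+ x. ennreal (f x) \<partial>M) \<le> (\<integral>\<^sup>+ x. ennreal c * ennreal (g x) \<partial>M)"
    using assms(3)
  proof (intro nn_integral_mono_AE, eventually_elim)
    case (elim x)
    then have "ennreal (f x) \<le> ennreal (c * g x)" by (auto intro: ennreal_leI)
    then show ?case using assms(1) by (simp add: ennreal_mult')
  qed
  also have "\<dots> = ennreal c * (\<integral>\<^sup>+ x. ennreal (g x) \<partial>M)"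
    using assms(2) by (intro nn_integral_cmult) measurable
  finally show ?thesis .
qed

lemma expectation_Qf_le_Kf:
  fixes X :: "'a \<Rightarrow> 'b" and pistar :: "'b \<Rightarrow> real" and f :: "'b \<Rightarrow> 'v::euclidean_space"
  assumes "X \<in> measurable M N" "pistar \<in> borel_measurable N" "f \<in> borel_measurable N"
    and "\<forall>x \<in> space N. 0 < pistar x \<and> pistar x < 1" "0 < a" "a \<le> 1/2"
    and "AE \<omega> in M. logistic_pi f \<gamma> (X \<omega>) \<ge> a * pistar (X \<omega>)"
  shows "(\<integral>\<^sup>+ \<omega>. ennreal (Qf (logistic_pi f \<gamma> (X \<omega>)) (pistar (X \<omega>))) \<partial>M)
      \<le> ennreal (5 / (3 * a)) * (\<integral>\<^sup>+ \<omega>. ennreal (Kf (logistic_pi f \<gamma> (X \<omega>)) (pistar (X \<omega>))) \<partial>M)"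
proof (rule nn_integral_le_cmult_AE)
  have "(\<lambda>x. Kf (logistic_pi f \<gamma> x) (pistar x)) \<in> borel_measurable N"
    using assms(2,3) unfolding Kf_def logistic_pi_def by measurable
  then show "(\<lambda>\<omega>. Kf (logistic_pi f \<gamma> (X \<omega>)) (pistar (X \<omega>))) \<in> borel_measurable M"
    using assms(1) by measurable
  show "AE \<omega> in M. Qf (logistic_pi f \<gamma> (X \<omega>)) (pistar (X \<omega>))
      \<le> 5 / (3 * a) * Kf (logistic_pi f \<gamma> (X \<omega>)) (pistar (X \<omega>))"
    using assms(7) AE_space
  proof eventually_elim
    case (elim \<omega>)
    then show ?case
      using assms(4-6) measurable_space[OF assms(1)] logistic_pi_bounds
      by (intro Qf_le_Kf) auto
  qed
qed (use assms in simp)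

theorem proposition4:
  shows
   "(\<forall>a::real. 0 < a \<and> a \<le> 1/2 \<longrightarrow>
       (\<forall>\<rho> \<rho>'. \<rho> \<in> {0<..<1} \<and> \<rho>' \<in> {0<..<1} \<and> \<rho> \<ge> a * \<rho>' \<longrightarrow>
          Qf \<rho> \<rho>' \<le> 5 / (3 * a) * Kf \<rho> \<rho>'))
    \<and> (\<forall>a::real. 0 < a \<longrightarrow>
       \<not> bdd_above {Qf \<rho> \<rho>' / (- Lf \<rho> \<rho>') | \<rho> \<rho>'.
                       \<rho> \<in> {0<..<1} \<and> \<rho>' \<in> {0<..<1} \<and> \<rho> \<ge> a * \<rho>'})
    \<and> (\<forall>(M::'a measure) (N::'b measure) (X::'a \<Rightarrow> 'b) (pistar::'b \<Rightarrow> real)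
          (f::'b \<Rightarrow> 'v::euclidean_space) (\<gamma>::'v) (a::real).
        prob_space M \<and> X \<in> measurable M N \<and> pistar \<in> borel_measurable N
        \<and> f \<in> borel_measurable N \<and> (\<forall>x \<in> space N. 0 < pistar x \<and> pistar x < 1)
        \<and> 0 < a \<and> a \<le> 1/2
        \<and> (AE \<omega> in M. logistic_pi f \<gamma> (X \<omega>) \<ge> a * pistar (X \<omega>))
        \<longrightarrow> (\<integral>\<^sup>+ \<omega>. ennreal (Qf (logistic_pi f \<gamma> (X \<omega>)) (pistar (X \<omega>))) \<partial>M)
            \<le> ennreal (5 / (3 * a)) * (\<integral>\<^sup>+ \<omega>. ennreal (Kf (logistic_pi f \<gamma> (X \<omega>)) (pistar (X \<omega>))) \<partial>M))"
  using Qf_le_Kf Qf_div_neg_Lf_unbounded expectation_Qf_le_Kf by auto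

end
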